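(* There is a universal constant $C>0$ such that the following holds. Let $N\ge1$, $d\ge1$, let $(x^{(s)},y^{(s)})_{s=1}^N$ be i.i.d. with $x^{(s)}$ uniform on $\{\pm1\}^d$ and $y^{(s)} = x^{(s)}_1x^{(s)}_2$, and $\widehat M := \frac1N\sum_{s=1}^N y^{(s)}x^{(s)}x^{(s)\top}$. For every $\delta\in(0,1)$, with probability at least $1-\delta$, \[ \|\widehat M\|_2 \le 1 + C\left(\sqrt{\frac{d\log(2d/\delta)}{N}} + \frac{d\log(2d/\delta)}{N}\right). \]
   Context: $\|\cdot\|_2$ is the spectral (operator) norm. *)

theory Defs
  imports "HOL-Probability.Probability"
begin

definition spec_norm :: "nat \<Rightarrow> (nat \<Rightarrow> nat \<Rightarrow> real) \<Rightarrow> real" where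
  "spec_norm d M = Sup {sqrt (\<Sum>i<d. (\<Sum>j<d. M i j * v j)\<^sup>2) | v. (\<Sum>j<d. (v j)\<^sup>2) = 1}"

text \<open>Sample space: N samples x^(s) in {-1,1}^d, indices s < N, i < d (0 elsewhere).
  The uniform distribution on this set is exactly N i.i.d. uniform draws from {-1,1}^d.\<close>
definition samples :: "nat \<Rightarrow> nat \<Rightarrow> (nat \<Rightarrow> nat \<Rightarrow> real) set" where
  "samples N d = {x. (\<forall>s<N. \<forall>i<d. x s i \<in> {-1, 1}) \<and> (\<forall>s i. \<not> (s < N \<and> i < d) \<longrightarrow> x s i = 0)}"

text \<open>Empirical matrix M = (1/N) sum_s y^(s) x^(s) x^(s)^T with y^(s) = x^(s)_1 x^(s)_2
  (coordinates 1,2 are indices 0,1 here).\<close>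
definition Mhat :: "nat \<Rightarrow> (nat \<Rightarrow> nat \<Rightarrow> real) \<Rightarrow> nat \<Rightarrow> nat \<Rightarrow> real" where
  "Mhat N x i j = (1 / real N) * (\<Sum>s<N. (x s 0 * x s 1) * x s i * x s j)"

end

theory Submission
  imports Defs
begin

text \<open>
  Write \<open>Mhat = E + R\<close>, where \<open>E = e\<^sub>1e\<^sub>2\<^sup>T + e\<^sub>2e\<^sub>1\<^sup>T\<close> is the mean of \<open>y x x\<^sup>T\<close> and has norm 1.
  For fixed \<open>u, w\<close> the form \<open>u\<^sup>T R w\<close> is the average of \<open>N\<close> independent centred copies of
  \<open>z\<^sub>1 z\<^sub>2 \<langle>u,z\<rangle> \<langle>w,z\<rangle>\<close> with \<open>z\<close> uniform on \<open>{\<plusminus>1}\<^sup>d\<close>.  By Hoeffding \<open>\<langle>u,z\<rangle>\<close> is sub-Gaussian, so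
  \<open>exp(\<langle>u,z\<rangle>\<^sup>2/8)\<close> has bounded mean and the product is sub-exponential; a Chernoff bound
  gives the tail \<open>exp(-N(\<lambda>t - 8192\<lambda>\<^sup>2))\<close> for \<open>0 \<le> \<lambda> \<le> 1/16\<close>.  On a grid net of mesh
  \<open>1/(8d)\<close>, with \<open>(16d+1)\<^sup>d\<close> points, \<open>\<parallel>R\<parallel> \<le> (64/47) max u\<^sup>T R w\<close>; a union bound over pairs of
  net points and \<open>t \<approx> \<surd>(X/N) + X/N\<close> with \<open>X = d log(2d/\<delta>)\<close> finish the argument.
\<close>

section \<open>The hypercube and the sample space\<close>

definition hypercube :: "nat \<Rightarrow> (nat \<Rightarrow> real) set" where
  "hypercube d = {z. (\<forall>i<d. z i \<in> {-1,1}) \<and> (\<forall>i. d \<le> i \<longrightarrow> z i = 0)}"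

lemma hypercube_0: "hypercube 0 = {\<lambda>_. 0}"
  unfolding hypercube_def by auto

lemma hypercube_Suc: "hypercube (Suc d) = (\<lambda>(z,a). z(d:=a)) ` (hypercube d \<times> {-1,1})"
proof (intro equalityI subsetI)
  fix x assume x: "x \<in> hypercube (Suc d)"
  have "x = (x(d:=0))(d := x d)" by simp
  moreover have "x(d:=0) \<in> hypercube d" "x d \<in> {-1,1}"
    using x unfolding hypercube_def by auto
  ultimately show "x \<in> (\<lambda>(z,a). z(d:=a)) ` (hypercube d \<times> {-1,1})"
    by (intro image_eqI[where x="(x(d:=0), x d)"]) auto
next
  fix x assume "x \<in> (\<lambda>(z,a). z(d:=a)) ` (hypercube d \<times> {-1,1})"
  then show "x \<in> hypercube (Suc d)" unfolding hypercube_def by (auto simp: less_Suc_eq)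
qed

lemma inj_on_hypercube_Suc: "inj_on (\<lambda>(z,a). z(d:=a)) (hypercube d \<times> {-1,1})"
proof (rule inj_onI, clarify)
  fix z a z' a'
  assume h: "z \<in> hypercube d" "z' \<in> hypercube d" "z(d := a) = z'(d := a')"
  have "z i = z' i" for i
    using fun_cong[OF h(3), of i] h(1,2) unfolding hypercube_def by (cases "i = d") auto
  then show "z = z' \<and> a = a'" using fun_cong[OF h(3), of d] by auto
qed

lemma finite_hypercube: "finite (hypercube d)"
  by (induction d) (auto simp: hypercube_0 hypercube_Suc)

lemma card_hypercube: "card (hypercube d) = 2 ^ d"
proof (induction d)
  case 0 then show ?case by (simp add: hypercube_0)
next
  case (Suc d)
  have "card (hypercube (Suc d)) = card (hypercube d \<times> {-1,1::real})"
    unfolding hypercube_Suc by (rule card_image[OF inj_on_hypercube_Suc])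
  then show ?case using Suc by (simp add: card_cartesian_product)
qed

lemma sum_hypercube_Suc:
  "(\<Sum>z\<in>hypercube (Suc d). f z) = (\<Sum>z\<in>hypercube d. f (z(d:=1)) + f (z(d:=-1)))"
proof -
  have "(\<Sum>z\<in>hypercube (Suc d). f z) = (\<Sum>(z,a)\<in>hypercube d \<times> {-1,1}. f (z(d:=a)))"
    unfolding hypercube_Suc by (subst sum.reindex[OF inj_on_hypercube_Suc]) (simp add: case_prod_unfold)
  also have "\<dots> = (\<Sum>z\<in>hypercube d. \<Sum>a\<in>{-1,1}. f (z(d:=a)))"
    by (rule sum.cartesian_product[symmetric])
  finally show ?thesis by (simp add: add.commute)
qed

lemma sum_hypercube_flip:
  assumes "k < d"
  shows "(\<Sum>z\<in>hypercube d. f z) = (\<Sum>z\<in>hypercube d. f (z(k := - z k)))"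
  by (rule sum.reindex_bij_witness[where i="\<lambda>z. z(k := - z k)" and j="\<lambda>z. z(k := - z k)"])
     (use assms in \<open>auto simp: hypercube_def\<close>)

lemma sum_hypercube_eq_0_if_odd:
  assumes "k < d" "\<And>z. f (z(k := - z k)) = - f z"
  shows "(\<Sum>z\<in>hypercube d. f z) = (0::real)"
  using sum_hypercube_flip[OF assms(1), of f] assms(2) by (simp add: sum_negf)

lemma samples_0: "samples 0 d = {\<lambda>_ _. 0}"
  unfolding samples_def by auto

lemma samples_Suc: "samples (Suc N) d = (\<lambda>(x,z). x(N:=z)) ` (samples N d \<times> hypercube d)"
proof (intro equalityI subsetI)
  fix x assume x: "x \<in> samples (Suc N) d"
  have "x = (x(N:=(\<lambda>_. 0)))(N := x N)" by simp
  moreover have "x(N:=(\<lambda>_. 0)) \<in> samples N d" "x N \<in> hypercube d"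
    using x unfolding samples_def hypercube_def by auto
  ultimately show "x \<in> (\<lambda>(x,z). x(N:=z)) ` (samples N d \<times> hypercube d)"
    by (intro image_eqI[where x="(x(N:=(\<lambda>_. 0)), x N)"]) auto
next
  fix x assume "x \<in> (\<lambda>(x,z). x(N:=z)) ` (samples N d \<times> hypercube d)"
  then obtain y z where h: "y \<in> samples N d" "z \<in> hypercube d" "x = y(N:=z)" by auto
  show "x \<in> samples (Suc N) d" unfolding samples_def
  proof (intro CollectI conjI allI impI)
    fix s i assume "s < Suc N" "i < d"
    then show "x s i \<in> {-1,1}" using h unfolding samples_def hypercube_def by (cases "s = N") auto
  next
    fix s i assume "\<not> (s < Suc N \<and> i < d)"
    then show "x s i = 0" using h unfolding samples_def hypercube_def by (cases "s = N") auto
  qed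
qed

lemma inj_on_samples_Suc: "inj_on (\<lambda>(x,z). x(N:=z)) (samples N d \<times> hypercube d)"
proof (rule inj_onI, clarify)
  fix x z x' z'
  assume h: "x \<in> samples N d" "x' \<in> samples N d" "x(N := z) = x'(N := z')"
  have "x s = x' s" for s
    using fun_cong[OF h(3), of s] h(1,2) unfolding samples_def by (cases "s = N") auto
  then show "x = x' \<and> z = z'" using fun_cong[OF h(3), of N] by auto
qed

lemma finite_samples: "finite (samples N d)"
  by (induction N) (auto simp: samples_0 samples_Suc finite_hypercube)

lemma sum_samples_prod:
  fixes g :: "(nat \<Rightarrow> real) \<Rightarrow> real"
  shows "(\<Sum>x\<in>samples N d. \<Prod>s<N. g (x s)) = (\<Sum>z\<in>hypercube d. g z) ^ N"
proof (induction N)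
  case 0 then show ?case by (simp add: samples_0)
next
  case (Suc N)
  have "(\<Sum>x\<in>samples (Suc N) d. \<Prod>s<Suc N. g (x s))
      = (\<Sum>(x,z)\<in>samples N d \<times> hypercube d. \<Prod>s<Suc N. g ((x(N:=z)) s))"
    unfolding samples_Suc by (subst sum.reindex[OF inj_on_samples_Suc]) (simp add: case_prod_unfold)
  also have "\<dots> = (\<Sum>(x,z)\<in>samples N d \<times> hypercube d. (\<Prod>s<N. g (x s)) * g z)"
    by (intro sum.cong refl) (auto simp: lessThan_Suc mult.commute intro!: prod.cong)
  also have "\<dots> = (\<Sum>x\<in>samples N d. \<Prod>s<N. g (x s)) * (\<Sum>z\<in>hypercube d. g z)"
    by (simp add: sum.cartesian_product[symmetric] sum_product)
  finally show ?case using Suc by simp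
qed

lemma card_samples: "card (samples N d) = 2 ^ (d * N)"
proof -
  have "real (card (samples N d)) = (\<Sum>x\<in>samples N d. \<Prod>s<N. (1::real))" by simp
  also have "\<dots> = (\<Sum>z\<in>hypercube d. (1::real)) ^ N" by (rule sum_samples_prod)
  also have "\<dots> = real (2 ^ (d * N))" by (simp add: card_hypercube power_mult)
  finally show ?thesis by (simp only: of_nat_eq_iff)
qed

lemma samples_nonempty: "samples N d \<noteq> {}"
  using card_samples[of N d] by auto

section \<open>Rademacher sums\<close>

definition dot :: "nat \<Rightarrow> (nat \<Rightarrow> real) \<Rightarrow> (nat \<Rightarrow> real) \<Rightarrow> real" where
  "dot d u v = (\<Sum>i<d. u i * v i)"

definition vnorm :: "nat \<Rightarrow> (nat \<Rightarrow> real) \<Rightarrow> real" where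
  "vnorm d v = L2_set v {..<d}"

lemma vnorm_nonneg: "vnorm d v \<ge> 0"
  unfolding vnorm_def by (rule L2_set_nonneg)

lemma vnorm_square: "(vnorm d v)^2 = (\<Sum>i<d. (v i)^2)"
  unfolding vnorm_def L2_set_def by (simp add: sum_nonneg)

lemma exp_plus_exp_minus_le:
  fixes b :: real
  shows "exp b + exp (- b) \<le> 2 * exp (b^2 / 2)"
proof -
  have "exp b + exp (- b) \<le> 2 * exp (b^2 / 2)" if b: "b \<ge> 0" for b :: real
  proof -
    have "-(2*b) * (1/2) + ln (1 + (1/2) * (exp (2*b) - 1)) \<le> (2*b)^2/8"
      using Hoeffdings_lemma_aux[of "2*b" "1/2"] b by simp
    then have "ln ((1 + exp b * exp b) / 2) \<le> b + b^2/2"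
      by (simp add: power2_eq_square field_simps mult_exp_exp)
    moreover have "0 < (1 + exp b * exp b) / 2" by (simp add: add_pos_pos)
    ultimately have "(1 + exp b * exp b) / 2 \<le> exp (b + b^2/2)"
      by (metis exp_le_cancel_iff exp_ln)
    then have "(1 + exp b * exp b) / 2 \<le> exp b * exp (b^2/2)"
      by (simp add: exp_add)
    then show ?thesis by (simp add: field_simps exp_minus)
  qed
  from this[of b] this[of "- b"] show ?thesis by (cases "b \<ge> 0") auto
qed

lemma sum_hypercube_exp_dot_le:
  "(\<Sum>z\<in>hypercube d. exp (t * dot d u z)) \<le> 2^d * exp (t^2 * (vnorm d u)^2 / 2)"
proof (induction d)
  case 0 then show ?case by (simp add: hypercube_0 dot_def vnorm_def)
next
  case (Suc d)
  have dot_upd: "dot (Suc d) u (z(d:=a)) = dot d u z + u d * a" for z a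
  proof -
    have "(\<Sum>i<d. u i * (z(d:=a)) i) = (\<Sum>i<d. u i * z i)" by (intro sum.cong) auto
    then show ?thesis unfolding dot_def by simp
  qed
  have "(\<Sum>z\<in>hypercube (Suc d). exp (t * dot (Suc d) u z))
      = (\<Sum>z\<in>hypercube d. exp (t * dot d u z) * (exp (t * u d) + exp (- (t * u d))))"
    unfolding sum_hypercube_Suc dot_upd
    by (intro sum.cong refl) (simp add: distrib_left right_diff_distrib exp_add exp_diff exp_minus field_simps)
  also have "\<dots> \<le> (\<Sum>z\<in>hypercube d. exp (t * dot d u z)) * (2 * exp ((t * u d)^2/2))"
    unfolding sum_distrib_right by (intro sum_mono mult_left_mono exp_plus_exp_minus_le) auto
  also have "\<dots> \<le> 2^d * exp (t^2 * (vnorm d u)^2 / 2) * (2 * exp ((t * u d)^2/2))"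
    by (intro mult_right_mono Suc) auto
  also have "\<dots> = 2^Suc d * exp (t^2 * (vnorm (Suc d) u)^2 / 2)"
    by (simp add: vnorm_square mult_exp_exp power_mult_distrib field_simps)
  finally show ?case .
qed

lemma power_div_fact_le_exp:
  fixes x :: real
  assumes "x \<ge> 0"
  shows "x^n / fact n \<le> exp x"
proof -
  obtain t where t: "exp x = (\<Sum>m<Suc n. x^m / fact m) + exp t / fact (Suc n) * x^Suc n"
    using Maclaurin_exp_le[of x "Suc n"] by blast
  have "x^n / fact n \<le> (\<Sum>m<Suc n. x^m / fact m)"
    by (rule member_le_sum) (use assms in auto)
  also have "\<dots> \<le> exp x"
    unfolding t using assms by (intro add_increasing2) auto
  finally show ?thesis .
qed

lemma fact_double_le: "(fact (2*k) :: real) \<le> fact k * (4 * real k)^k"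
proof -
  have "fact k * fact (2*k - k) * (2*k choose k) = (fact (2*k) :: nat)"
    by (rule binomial_fact_lemma) simp
  then have "(fact (2*k) :: real) = fact k * fact k * real (2*k choose k)"
    by (metis diff_add_inverse2 mult_2 of_nat_fact of_nat_mult)
  also have "\<dots> \<le> fact k * real (k^k) * 4^k"
  proof (intro mult_mono)
    have "real (2*k choose k) \<le> 2^(2*k)"
      using binomial_le_pow2[of "2*k" k] by (metis of_nat_le_iff of_nat_numeral of_nat_power)
    then show "real (2*k choose k) \<le> 4^k" by (simp add: power_mult)
  qed (use fact_le_power[of k, where 'a=real] in simp_all)
  finally show ?thesis by (simp add: power_mult_distrib mult_ac)
qed

lemma sum_hypercube_dot_power_le:
  fixes t :: real
  assumes t: "t > 0"
  shows "(\<Sum>z\<in>hypercube d. (dot d u z)^(2*k))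
         \<le> fact (2*k) / t^(2*k) * (2 * 2^d * exp (t^2 * (vnorm d u)^2 / 2))"
proof -
  have pointwise: "s^(2*k) \<le> fact (2*k) / t^(2*k) * (exp (t * s) + exp ((- t) * s))" for s :: real
  proof -
    have "(t * \<bar>s\<bar>)^(2*k) / fact (2*k) \<le> exp (t * \<bar>s\<bar>)"
      by (rule power_div_fact_le_exp) (use t in simp)
    also have "\<dots> \<le> exp (t * s) + exp ((- t) * s)"
      by (cases "s \<ge> 0") auto
    finally have "t^(2*k) * s^(2*k) \<le> fact (2*k) * (exp (t * s) + exp ((- t) * s))"
      by (simp add: power_mult_distrib power_even_abs field_simps)
    then show ?thesis using t by (simp add: field_simps)
  qed
  have "(\<Sum>z\<in>hypercube d. (dot d u z)^(2*k)) \<le> fact (2*k) / t^(2*k) *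
          ((\<Sum>z\<in>hypercube d. exp (t * dot d u z)) + (\<Sum>z\<in>hypercube d. exp ((- t) * dot d u z)))"
    unfolding sum.distrib[symmetric] sum_distrib_left by (intro sum_mono pointwise)
  also have "\<dots> \<le> fact (2*k) / t^(2*k) *
          (2^d * exp (t^2 * (vnorm d u)^2 / 2) + 2^d * exp ((- t)^2 * (vnorm d u)^2 / 2))"
    by (intro mult_left_mono add_mono sum_hypercube_exp_dot_le) auto
  finally show ?thesis by simp
qed

lemma sum_hypercube_dot_even_power_le:
  "(\<Sum>z\<in>hypercube d. (dot d u z)^(2*k) / fact k) \<le> 2 * 2^d * (2 * exp 1 * (vnorm d u)^2)^k"
proof (cases "k = 0 \<or> vnorm d u = 0")
  case True
  moreover have "vnorm d u = 0 \<Longrightarrow> dot d u z = 0" for z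
    unfolding vnorm_def dot_def by (simp add: L2_set_eq_0_iff)
  ultimately show ?thesis by (cases "k = 0") (auto simp: card_hypercube zero_power)
next
  case False
  define r where "r = (vnorm d u)^2"
  have r: "r > 0" and k: "k > 0" using False vnorm_nonneg[of d u] unfolding r_def by auto
  define t where "t = sqrt (2 * k / r)"
  have t: "t > 0" "t^2 = 2 * k / r" unfolding t_def using r k by auto
  have sum_le: "(\<Sum>z\<in>hypercube d. (dot d u z)^(2*k)) \<le> fact (2*k) / t^(2*k) * (2 * 2^d * exp k)"
    using sum_hypercube_dot_power_le[OF t(1), of d u k] r unfolding r_def[symmetric] t(2) by simp
  have "fact (2*k) / t^(2*k) = fact (2*k) * (r / (2 * k))^k"
    by (simp add: power_mult t(2) power_divide)
  also have "\<dots> \<le> fact k * (4 * real k)^k * (r / (2 * k))^k"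
    using r by (intro mult_right_mono fact_double_le) auto
  also have "\<dots> = fact k * (2 * r)^k"
  proof -
    have "4 * real k * (r / (2 * k)) = 2 * r" using k by (simp add: field_simps)
    then show ?thesis by (metis mult.assoc power_mult_distrib)
  qed
  finally have "(\<Sum>z\<in>hypercube d. (dot d u z)^(2*k)) \<le> fact k * (2 * r)^k * (2 * 2^d * exp k)"
    by (intro order_trans[OF sum_le] mult_right_mono) auto
  then have "(\<Sum>z\<in>hypercube d. (dot d u z)^(2*k)) / fact k \<le> 2 * 2^d * ((2 * r)^k * exp k)"
    by (simp add: pos_divide_le_eq mult_ac)
  also have "(2 * r)^k * exp k = (2 * exp 1 * r)^k"
    using exp_of_nat_mult[of k "1::real"] by (simp add: power_mult_distrib)
  finally show ?thesis unfolding r_def by (simp add: sum_divide_distrib)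
qed

lemma sum_hypercube_exp_dot_square_le:
  assumes b: "\<beta> \<ge> 0" and q: "2 * exp 1 * \<beta> * (vnorm d u)^2 < 1"
  shows "(\<Sum>z\<in>hypercube d. exp (\<beta> * (dot d u z)^2)) \<le> 2 * 2^d / (1 - 2 * exp 1 * \<beta> * (vnorm d u)^2)"
proof -
  define q where "q = 2 * exp 1 * \<beta> * (vnorm d u)^2"
  have q01: "0 \<le> q" "q < 1" using b q unfolding q_def by auto
  define f where "f z n = (\<beta> * (dot d u z)^2)^n / fact n" for z n
  have f_sums: "f z sums exp (\<beta> * (dot d u z)^2)" for z
    using exp_converges[of "\<beta> * (dot d u z)^2"] unfolding f_def by (simp add: divide_inverse mult.commute)
  have "(\<Sum>z\<in>hypercube d. exp (\<beta> * (dot d u z)^2)) = (\<Sum>n. \<Sum>z\<in>hypercube d. f z n)"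
    using f_sums by (simp add: sums_iff suminf_sum)
  also have "\<dots> \<le> (\<Sum>n. 2 * 2^d * q^n)"
  proof (rule suminf_le)
    fix n
    have "(\<Sum>z\<in>hypercube d. f z n) = \<beta>^n * (\<Sum>z\<in>hypercube d. (dot d u z)^(2*n) / fact n)"
      unfolding f_def by (simp add: sum_distrib_left power_mult_distrib power_mult)
    also have "\<dots> \<le> \<beta>^n * (2 * 2^d * (2 * exp 1 * (vnorm d u)^2)^n)"
      by (intro mult_left_mono sum_hypercube_dot_even_power_le) (use b in simp)
    finally show "(\<Sum>z\<in>hypercube d. f z n) \<le> 2 * 2^d * q^n"
      unfolding q_def by (simp add: power_mult_distrib mult_ac)
  next
    show "summable (\<lambda>n. \<Sum>z\<in>hypercube d. f z n)"
      using f_sums by (intro summable_sum) (auto simp: sums_iff)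
    show "summable (\<lambda>n. 2 * 2^d * q^n :: real)"
      using q01 by (intro summable_mult summable_geometric) simp
  qed
  also have "\<dots> = 2 * 2^d / (1 - q)"
    using q01 by (simp add: suminf_mult suminf_geometric divide_inverse)
  finally show ?thesis unfolding q_def .
qed

lemma sum_hypercube_exp_dot_square_div_8_le:
  assumes "vnorm d u \<le> 9/8"
  shows "(\<Sum>z\<in>hypercube d. exp ((dot d u z)^2 / 8)) \<le> 16 * 2^d"
proof -
  have "(vnorm d u)^2 \<le> (9/8)^2" using assms by (intro power_mono vnorm_nonneg)
  then have "2 * exp 1 * (1/8) * (vnorm d u)^2 \<le> 2 * (272/100) * (1/8) * (81/64)"
    using e_less_272 by (intro mult_mono) (auto simp: power_divide)
  then have q: "2 * exp 1 * (1/8) * (vnorm d u)^2 \<le> 7/8" by simp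
  have "(\<Sum>z\<in>hypercube d. exp ((dot d u z)^2 / 8)) = (\<Sum>z\<in>hypercube d. exp ((1/8) * (dot d u z)^2))"
    by simp
  also have "\<dots> \<le> 2 * 2^d / (1 - 2 * exp 1 * (1/8) * (vnorm d u)^2)"
    by (rule sum_hypercube_exp_dot_square_le) (use q in auto)
  also have "\<dots> \<le> 2 * 2^d / (1 - 7/8)"
    using q by (intro divide_left_mono) auto
  finally show ?thesis by simp
qed

section \<open>The sub-exponential summand\<close>

definition sample_form :: "nat \<Rightarrow> (nat \<Rightarrow> real) \<Rightarrow> (nat \<Rightarrow> real) \<Rightarrow> (nat \<Rightarrow> real) \<Rightarrow> real" where
  "sample_form d u w z = z 0 * z 1 * dot d u z * dot d w z"

lemma abs_sample_form:
  assumes "z \<in> hypercube d" "2 \<le> d"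
  shows "\<bar>sample_form d u w z\<bar> = \<bar>dot d u z\<bar> * \<bar>dot d w z\<bar>"
proof -
  have "z 0 \<in> {-1,1}" "z 1 \<in> {-1,1}" using assms unfolding hypercube_def by auto
  then show ?thesis unfolding sample_form_def by (auto simp: abs_mult)
qed

lemma exp_le_one_plus_square:
  fixes a :: real
  shows "exp a \<le> 1 + a + a^2 * exp \<bar>a\<bar>"
proof -
  obtain t where t: "\<bar>t\<bar> \<le> \<bar>a\<bar>" "exp a = (\<Sum>m<2. a^m / fact m) + exp t / fact 2 * a^2"
    using Maclaurin_exp_le[of a 2] by blast
  have "exp t \<le> exp \<bar>a\<bar>" using t(1) abs_ge_self[of t] by simp
  then have "exp t / fact 2 \<le> exp \<bar>a\<bar>"
    unfolding fact_2 using exp_gt_zero[of t] by linarith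
  then have "exp t / fact 2 * a^2 \<le> exp \<bar>a\<bar> * a^2"
    by (rule mult_right_mono) simp
  moreover have "(\<Sum>m<2. a^m / fact m) = 1 + a" by (simp add: numeral_2_eq_2)
  ultimately show ?thesis using t(2) by (simp add: mult.commute)
qed

lemma square_mult_exp_le:
  fixes x l :: real
  assumes x: "x \<ge> 0" and l: "\<bar>l\<bar> \<le> 1/16"
  shows "x^2 * exp (\<bar>l\<bar> * x) \<le> 512 * exp (x/8)"
proof -
  have "x^2 * exp (\<bar>l\<bar> * x) \<le> (512 * exp (x/16)) * exp (x/16)"
  proof (intro mult_mono)
    have "(x/16)^2 / fact 2 \<le> exp (x/16)" by (rule power_div_fact_le_exp) (use x in simp)
    then show "x^2 \<le> 512 * exp (x/16)" by (simp add: fact_numeral power_divide)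
    have "\<bar>l\<bar> * x \<le> (1/16) * x" using l x by (intro mult_right_mono) auto
    then show "exp (\<bar>l\<bar> * x) \<le> exp (x/16)" by simp
  qed auto
  also have "\<dots> = 512 * exp (x/8)" by (simp add: mult_exp_exp)
  finally show ?thesis .
qed

lemma exp_sample_form_le:
  assumes z: "z \<in> hypercube d" and d: "2 \<le> d" and l: "\<bar>l\<bar> \<le> 1/16"
  shows "exp (l * sample_form d u w z) \<le> 1 + l * sample_form d u w z
          + l^2 * (256 * (exp ((dot d u z)^2/8) + exp ((dot d w z)^2/8)))"
proof -
  define a b where "a = dot d u z" and "b = dot d w z"
  define x where "x = \<bar>sample_form d u w z\<bar>"
  have "x = \<bar>a\<bar> * \<bar>b\<bar>" unfolding x_def a_def b_def by (rule abs_sample_form[OF z d])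
  then have "x \<le> a^2/2 + b^2/2" using sum_squares_bound[of "\<bar>a\<bar>" "\<bar>b\<bar>"] by simp
  then have "exp (x/8) \<le> exp (a^2/16) * exp (b^2/16)" by (simp add: mult_exp_exp)
  also have "\<dots> \<le> ((exp (a^2/16))^2 + (exp (b^2/16))^2) / 2"
    using sum_squares_bound[of "exp (a^2/16)" "exp (b^2/16)"] by simp
  also have "\<dots> = (exp (a^2/8) + exp (b^2/8)) / 2"
    by (simp add: power2_eq_square mult_exp_exp)
  finally have "512 * exp (x/8) \<le> 256 * (exp (a^2/8) + exp (b^2/8))" by simp
  then have "l^2 * (x^2 * exp (\<bar>l\<bar> * x)) \<le> l^2 * (256 * (exp (a^2/8) + exp (b^2/8)))"
    using square_mult_exp_le[OF _ l, of x] unfolding x_def by (intro mult_left_mono) auto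
  moreover have "(l * sample_form d u w z)^2 * exp \<bar>l * sample_form d u w z\<bar>
      = l^2 * (x^2 * exp (\<bar>l\<bar> * x))"
    unfolding x_def by (simp add: power_mult_distrib abs_mult)
  ultimately show ?thesis unfolding a_def b_def
    using exp_le_one_plus_square[of "l * sample_form d u w z"] by linarith
qed

lemma sum_hypercube_exp_sample_form_le:
  assumes d: "2 \<le> d" and u: "vnorm d u \<le> 9/8" and w: "vnorm d w \<le> 9/8" and l: "\<bar>l\<bar> \<le> 1/16"
  defines "\<mu> \<equiv> (\<Sum>z\<in>hypercube d. sample_form d u w z) / 2^d"
  shows "(\<Sum>z\<in>hypercube d. exp (l * (sample_form d u w z - \<mu>))) \<le> 2^d * exp (8192 * l^2)"
proof -
  have "(\<Sum>z\<in>hypercube d. exp (l * sample_form d u w z))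
      \<le> (\<Sum>z\<in>hypercube d. 1 + l * sample_form d u w z
          + l^2 * (256 * (exp ((dot d u z)^2/8) + exp ((dot d w z)^2/8))))"
    by (intro sum_mono exp_sample_form_le d l)
  also have "\<dots> = 2^d + l * (\<Sum>z\<in>hypercube d. sample_form d u w z) + l^2 * 256 *
      ((\<Sum>z\<in>hypercube d. exp ((dot d u z)^2/8)) + (\<Sum>z\<in>hypercube d. exp ((dot d w z)^2/8)))"
    by (simp add: sum.distrib sum_distrib_left card_hypercube algebra_simps)
  also have "\<dots> \<le> 2^d + l * (\<Sum>z\<in>hypercube d. sample_form d u w z) + l^2 * 256 * (16 * 2^d + 16 * 2^d)"
    by (intro add_left_mono mult_left_mono add_mono sum_hypercube_exp_dot_square_div_8_le u w) auto
  also have "\<dots> = 2^d * (1 + (l * \<mu> + 8192 * l^2))"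
    unfolding \<mu>_def by (simp add: algebra_simps)
  also have "\<dots> \<le> 2^d * exp (l * \<mu> + 8192 * l^2)"
    by (intro mult_left_mono exp_ge_add_one_self) auto
  finally have "exp (- (l * \<mu>)) * (\<Sum>z\<in>hypercube d. exp (l * sample_form d u w z))
      \<le> exp (- (l * \<mu>)) * (2^d * exp (l * \<mu> + 8192 * l^2))"
    by (intro mult_left_mono) auto
  then show ?thesis
    by (simp add: sum_distrib_left right_diff_distrib exp_diff exp_add exp_minus field_simps)
qed

section \<open>Bilinear forms and the spectral norm\<close>

definition mat_vec :: "nat \<Rightarrow> (nat \<Rightarrow> nat \<Rightarrow> real) \<Rightarrow> (nat \<Rightarrow> real) \<Rightarrow> nat \<Rightarrow> real" where
  "mat_vec d M v i = (\<Sum>j<d. M i j * v j)"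

definition bilin :: "nat \<Rightarrow> (nat \<Rightarrow> nat \<Rightarrow> real) \<Rightarrow> (nat \<Rightarrow> real) \<Rightarrow> (nat \<Rightarrow> real) \<Rightarrow> real" where
  "bilin d M u w = (\<Sum>i<d. \<Sum>j<d. u i * M i j * w j)"

lemma bilin_eq_dot_mat_vec: "bilin d M u w = dot d u (mat_vec d M w)"
  unfolding bilin_def dot_def mat_vec_def by (simp add: sum_distrib_left mult_ac)

lemma bilin_commute:
  assumes "\<And>i j. i < d \<Longrightarrow> j < d \<Longrightarrow> M i j = M j i"
  shows "bilin d M u w = bilin d M w u"
  unfolding bilin_def by (subst sum.swap) (auto simp: assms mult_ac intro!: sum.cong)

lemma bilin_diff_left: "bilin d M (\<lambda>i. a i - b i) w = bilin d M a w - bilin d M b w"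
  unfolding bilin_def by (simp add: left_diff_distrib sum_subtractf)

lemma bilin_diff_right: "bilin d M u (\<lambda>j. a j - b j) = bilin d M u a - bilin d M u b"
  unfolding bilin_def by (simp add: right_diff_distrib sum_subtractf)

lemma spec_norm_eq_Sup:
  "spec_norm d M = Sup {vnorm d (mat_vec d M v) | v. (\<Sum>j<d. (v j)^2) = 1}"
  unfolding spec_norm_def vnorm_def mat_vec_def L2_set_def by simp

lemma dot_le_vnorm_mult: "dot d a b \<le> vnorm d a * vnorm d b"
proof -
  have "dot d a b \<le> (\<Sum>i<d. \<bar>a i\<bar> * \<bar>b i\<bar>)"
    unfolding dot_def by (intro sum_mono) (simp add: abs_mult[symmetric])
  also have "\<dots> \<le> vnorm d a * vnorm d b" unfolding vnorm_def by (rule L2_set_mult_ineq)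
  finally show ?thesis .
qed

lemma abs_le_1_if_unit:
  fixes v :: "nat \<Rightarrow> real"
  assumes "(\<Sum>j<d. (v j)^2) = 1" "j < d"
  shows "\<bar>v j\<bar> \<le> 1"
proof -
  have "(v j)^2 \<le> (\<Sum>j<d. (v j)^2)" by (rule member_le_sum) (use assms in auto)
  then show ?thesis using assms by (simp add: abs_square_le_1)
qed

lemma bdd_above_spec_norm: "bdd_above {vnorm d (mat_vec d M v) | v. (\<Sum>j<d. (v j)^2) = 1}"
proof (rule bdd_aboveI, clarify)
  fix v :: "nat \<Rightarrow> real" assume v: "(\<Sum>j<d. (v j)^2) = 1"
  have "\<bar>mat_vec d M v i\<bar> \<le> (\<Sum>j<d. \<bar>M i j\<bar>)" for i
  proof -
    have "\<bar>mat_vec d M v i\<bar> \<le> (\<Sum>j<d. \<bar>M i j\<bar> * \<bar>v j\<bar>)"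
      unfolding mat_vec_def abs_mult[symmetric] by (rule sum_abs)
    also have "\<dots> \<le> (\<Sum>j<d. \<bar>M i j\<bar>)"
      using abs_le_1_if_unit[OF v] by (intro sum_mono) (simp add: mult_left_le)
    finally show ?thesis .
  qed
  then have "vnorm d (mat_vec d M v) \<le> (\<Sum>i<d. \<Sum>j<d. \<bar>M i j\<bar>)"
    unfolding vnorm_def by (intro order_trans[OF L2_set_le_sum_abs] sum_mono)
  then show "vnorm d (mat_vec d M v) \<le> (\<Sum>i<d. \<Sum>j<d. \<bar>M i j\<bar>)" .
qed

lemma vnorm_mat_vec_le_spec_norm:
  assumes "(\<Sum>j<d. (v j)^2) = 1"
  shows "vnorm d (mat_vec d M v) \<le> spec_norm d M"
  unfolding spec_norm_eq_Sup by (rule cSup_upper[OF _ bdd_above_spec_norm]) (use assms in blast)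

lemma sum_square_indicator_0:
  fixes d :: nat
  assumes "1 \<le> d"
  shows "(\<Sum>j<d. (if j = 0 then 1 else 0 :: real)^2) = 1"
proof -
  have "(\<Sum>j<d. (if j = 0 then 1 else 0 :: real)^2) = (\<Sum>j<d. if j = 0 then 1 else 0)"
    by (intro sum.cong) auto
  also have "\<dots> = 1" using assms by simp
  finally show ?thesis .
qed

lemma spec_norm_le:
  assumes "1 \<le> d" "\<And>v. (\<Sum>j<d. (v j)^2) = 1 \<Longrightarrow> vnorm d (mat_vec d M v) \<le> b"
  shows "spec_norm d M \<le> b"
  unfolding spec_norm_eq_Sup
proof (rule cSup_least)
  have "vnorm d (mat_vec d M (\<lambda>j. if j = 0 then 1 else 0))
        \<in> {vnorm d (mat_vec d M v) |v. (\<Sum>j<d. (v j)^2) = 1}"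
    using sum_square_indicator_0[OF assms(1)] by blast
  then show "{vnorm d (mat_vec d M v) |v. (\<Sum>j<d. (v j)^2) = 1} \<noteq> {}" by blast
qed (use assms(2) in blast)

lemma spec_norm_nonneg: "1 \<le> d \<Longrightarrow> spec_norm d M \<ge> 0"
  by (rule order_trans[OF vnorm_nonneg vnorm_mat_vec_le_spec_norm[OF sum_square_indicator_0]])

lemma vnorm_mat_vec_le: "vnorm d (mat_vec d M z) \<le> spec_norm d M * vnorm d z"
proof (cases "vnorm d z = 0")
  case True
  then have "mat_vec d M z i = 0" for i
    unfolding vnorm_def mat_vec_def by (simp add: L2_set_eq_0_iff)
  then show ?thesis using True by (simp add: vnorm_def L2_set_def)
next
  case False
  define n where "n = vnorm d z"
  have n: "n > 0" using False vnorm_nonneg[of d z] unfolding n_def by simp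
  have "(\<Sum>j<d. (z j / n)^2) = (vnorm d z)^2 / n^2"
    unfolding vnorm_square by (simp add: power_divide sum_divide_distrib)
  then have "(\<Sum>j<d. (z j / n)^2) = 1" using n unfolding n_def by simp
  from vnorm_mat_vec_le_spec_norm[OF this, of M]
  have "vnorm d (mat_vec d M z) / n \<le> spec_norm d M"
    using n unfolding vnorm_def L2_set_def mat_vec_def
    by (simp add: power_divide sum_divide_distrib[symmetric] real_sqrt_divide)
  then show ?thesis using n unfolding n_def by (simp add: field_simps)
qed

lemma bilin_le_spec_norm: "bilin d M a b \<le> spec_norm d M * vnorm d a * vnorm d b"
proof -
  have "bilin d M a b \<le> vnorm d a * vnorm d (mat_vec d M b)"
    unfolding bilin_eq_dot_mat_vec by (rule dot_le_vnorm_mult)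
  also have "\<dots> \<le> vnorm d a * (spec_norm d M * vnorm d b)"
    by (intro mult_left_mono vnorm_mat_vec_le vnorm_nonneg)
  finally show ?thesis by (simp add: mult_ac)
qed

lemma exists_unit_dot_eq_vnorm:
  assumes "1 \<le> d"
  shows "\<exists>a. (\<Sum>j<d. (a j)^2) = 1 \<and> dot d a z = vnorm d z"
proof (cases "vnorm d z = 0")
  case True
  then have "dot d (\<lambda>j. if j = 0 then 1 else 0) z = vnorm d z"
    unfolding vnorm_def dot_def by (simp add: L2_set_eq_0_iff)
  then show ?thesis using sum_square_indicator_0[OF assms]
    by (intro exI[of _ "\<lambda>j. if j = 0 then 1 else 0"]) simp
next
  case False
  define n where "n = vnorm d z"
  have n: "n > 0" using False vnorm_nonneg[of d z] unfolding n_def by simp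
  have nn: "n^2 = (\<Sum>j<d. (z j)^2)" unfolding n_def by (rule vnorm_square)
  have "(\<Sum>j<d. (z j / n)^2) = (\<Sum>j<d. (z j)^2) / n^2"
    by (simp add: power_divide sum_divide_distrib)
  then have unit: "(\<Sum>j<d. (z j / n)^2) = 1" using n unfolding nn[symmetric] by simp
  have "dot d (\<lambda>j. z j / n) z = (\<Sum>j<d. (z j)^2) / n"
    unfolding dot_def by (simp add: power2_eq_square sum_divide_distrib)
  then have "dot d (\<lambda>j. z j / n) z = vnorm d z"
    using n unfolding nn[symmetric] n_def by (simp add: power2_eq_square)
  with unit show ?thesis by (intro exI[of _ "\<lambda>j. z j / n"]) simp
qed

lemma spec_norm_add_le:
  assumes "1 \<le> d"
  shows "spec_norm d (\<lambda>i j. A i j + B i j) \<le> spec_norm d A + spec_norm d B"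
proof (rule spec_norm_le[OF assms])
  fix v :: "nat \<Rightarrow> real" assume v: "(\<Sum>j<d. (v j)^2) = 1"
  have "mat_vec d (\<lambda>i j. A i j + B i j) v = (\<lambda>i. mat_vec d A v i + mat_vec d B v i)"
    unfolding mat_vec_def by (simp add: distrib_right sum.distrib)
  then have "vnorm d (mat_vec d (\<lambda>i j. A i j + B i j) v) \<le> vnorm d (mat_vec d A v) + vnorm d (mat_vec d B v)"
    unfolding vnorm_def by (simp add: L2_set_triangle_ineq)
  also have "\<dots> \<le> spec_norm d A + spec_norm d B"
    by (intro add_mono vnorm_mat_vec_le_spec_norm v)
  finally show "vnorm d (mat_vec d (\<lambda>i j. A i j + B i j) v) \<le> spec_norm d A + spec_norm d B" .
qed

text \<open>For a unit vector \<open>v\<close> pick a unit \<open>a\<close> with \<open>\<parallel>Av\<parallel> = a\<^sup>T A v\<close> and net points \<open>u \<approx> a\<close>,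
  \<open>w \<approx> v\<close>; then \<open>a\<^sup>T A v = u\<^sup>T A w + (v - w)\<^sup>T A u + (a - u)\<^sup>T A v\<close>, so
  \<open>\<parallel>A\<parallel> \<le> t + (9/64 + 1/8) \<parallel>A\<parallel>\<close>.\<close>

lemma spec_norm_le_of_net:
  assumes d: "1 \<le> d"
    and sym: "\<And>i j. i < d \<Longrightarrow> j < d \<Longrightarrow> A i j = A j i"
    and net: "\<And>v. (\<Sum>j<d. (v j)^2) = 1 \<Longrightarrow> \<exists>w\<in>V. vnorm d (\<lambda>j. v j - w j) \<le> 1/8 \<and> vnorm d w \<le> 9/8"
    and bound: "\<And>u w. u \<in> V \<Longrightarrow> w \<in> V \<Longrightarrow> bilin d A u w \<le> t"
  shows "spec_norm d A \<le> 64 * t / 47"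
proof -
  define S where "S = spec_norm d A"
  have S: "S \<ge> 0" unfolding S_def by (rule spec_norm_nonneg[OF d])
  have "vnorm d (mat_vec d A v) \<le> t + 17/64 * S" if v: "(\<Sum>j<d. (v j)^2) = 1" for v
  proof -
    obtain a where a: "(\<Sum>j<d. (a j)^2) = 1" "dot d a (mat_vec d A v) = vnorm d (mat_vec d A v)"
      using exists_unit_dot_eq_vnorm[OF d] by blast
    obtain u where u: "u \<in> V" "vnorm d (\<lambda>j. a j - u j) \<le> 1/8" "vnorm d u \<le> 9/8"
      using net[OF a(1)] by blast
    obtain w where w: "w \<in> V" "vnorm d (\<lambda>j. v j - w j) \<le> 1/8"
      using net[OF v] by blast
    have comm: "bilin d A u (\<lambda>j. v j - w j) = bilin d A (\<lambda>j. v j - w j) u"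
      by (intro bilin_commute sym)
    have "vnorm d (mat_vec d A v) = bilin d A u w + bilin d A (\<lambda>j. v j - w j) u + bilin d A (\<lambda>j. a j - u j) v"
      using a(2) comm by (simp add: bilin_eq_dot_mat_vec[symmetric] bilin_diff_left bilin_diff_right)
    also have "\<dots> \<le> t + S * (1/8) * (9/8) + S * (1/8) * 1"
    proof (intro add_mono bound u w)
      have "S * vnorm d (\<lambda>j. v j - w j) * vnorm d u \<le> S * (1/8) * (9/8)"
        using w(2) u(3) S by (intro mult_mono mult_left_mono) (auto simp: vnorm_nonneg)
      then show "bilin d A (\<lambda>j. v j - w j) u \<le> S * (1/8) * (9/8)"
        using bilin_le_spec_norm[of d A "\<lambda>j. v j - w j" u] unfolding S_def by linarith
      have "S * vnorm d (\<lambda>j. a j - u j) * vnorm d v \<le> S * (1/8) * 1"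
        using u(2) S a(1) v by (intro mult_mono mult_left_mono) (auto simp: vnorm_nonneg vnorm_def L2_set_def)
      then show "bilin d A (\<lambda>j. a j - u j) v \<le> S * (1/8) * 1"
        using bilin_le_spec_norm[of d A "\<lambda>j. a j - u j" v] unfolding S_def by linarith
    qed
    finally show ?thesis by simp
  qed
  then have "S \<le> t + 17/64 * S" unfolding S_def by (rule spec_norm_le[OF d])
  then show ?thesis unfolding S_def[symmetric] by simp
qed

section \<open>A grid net of the unit sphere\<close>

definition grid_point :: "nat \<Rightarrow> (nat \<Rightarrow> int) \<Rightarrow> nat \<Rightarrow> real" where
  "grid_point d k j = (if j < d then real_of_int (k j) / (8 * real d) else 0)"

definition net :: "nat \<Rightarrow> (nat \<Rightarrow> real) set" where
  "net d = {w \<in> grid_point d ` (PiE {..<d} (\<lambda>_. {-(8 * int d)..8 * int d})). vnorm d w \<le> 9/8}"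

lemma vnorm_le_of_mem_net: "w \<in> net d \<Longrightarrow> vnorm d w \<le> 9/8"
  unfolding net_def by blast

lemma net_subset: "net d \<subseteq> grid_point d ` (PiE {..<d} (\<lambda>_. {-(8 * int d)..8 * int d}))"
  unfolding net_def by blast

lemma finite_net: "finite (net d)"
  by (rule finite_subset[OF net_subset]) (intro finite_imageI finite_PiE; simp)

lemma card_net_le: "card (net d) \<le> (16 * d + 1) ^ d"
proof -
  have "card (net d) \<le> card (grid_point d ` (PiE {..<d} (\<lambda>_. {-(8 * int d)..8 * int d})))"
    by (intro card_mono net_subset finite_imageI finite_PiE) simp_all
  also have "\<dots> \<le> card (PiE {..<d} (\<lambda>_. {-(8 * int d)..8 * int d}))"
    by (rule card_image_le) (simp add: finite_PiE)
  also have "\<dots> = (16 * d + 1) ^ d"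
    by (simp add: card_PiE nat_add_distrib nat_mult_distrib)
  finally show ?thesis .
qed

lemma abs_diff_floor_div_le:
  fixes c x :: real
  assumes c: "c > 0"
  shows "\<bar>x - \<lfloor>c * x\<rfloor> / c\<bar> \<le> 1 / c"
proof -
  have "x - \<lfloor>c * x\<rfloor> / c = (c * x - \<lfloor>c * x\<rfloor>) / c" using c by (simp add: diff_divide_distrib)
  moreover have "0 \<le> c * x - \<lfloor>c * x\<rfloor>" "c * x - \<lfloor>c * x\<rfloor> \<le> 1" by linarith+
  ultimately show ?thesis using c by (simp add: divide_right_mono)
qed

lemma net_covers:
  assumes d: "1 \<le> d" and v: "(\<Sum>j<d. (v j)^2) = 1"
  shows "\<exists>w\<in>net d. vnorm d (\<lambda>j. v j - w j) \<le> 1/8 \<and> vnorm d w \<le> 9/8"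
proof -
  define k where "k j = (if j < d then \<lfloor>8 * real d * v j\<rfloor> else undefined)" for j
  define w where "w = grid_point d k"
  have dpos: "real d > 0" using d by simp
  have "k j \<in> {-(8 * int d)..8 * int d}" if j: "j < d" for j
  proof -
    have "-1 \<le> v j" "v j \<le> 1" using abs_le_1_if_unit[OF v j] by auto
    then have "8 * real d * v j \<le> 8 * real d * 1" "8 * real d * (-1) \<le> 8 * real d * v j"
      using dpos by (intro mult_left_mono; simp)+
    then have "\<lfloor>8 * real d * v j\<rfloor> \<le> 8 * int d" "-(8 * int d) \<le> \<lfloor>8 * real d * v j\<rfloor>"
      by (simp_all add: floor_le_iff le_floor_iff)
    then show ?thesis unfolding k_def using j by simp
  qed
  then have k: "k \<in> PiE {..<d} (\<lambda>_. {-(8 * int d)..8 * int d})"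
    unfolding k_def by (auto simp: PiE_def extensional_def)
  have err: "(v j - w j)^2 \<le> (1 / (8 * real d))^2" if j: "j < d" for j
  proof -
    have "w j = \<lfloor>8 * real d * v j\<rfloor> / (8 * real d)"
      unfolding w_def grid_point_def k_def using j by simp
    then have "\<bar>v j - w j\<bar> \<le> 1 / (8 * real d)"
      using abs_diff_floor_div_le[of "8 * real d" "v j"] dpos by simp
    then show ?thesis by (metis abs_ge_zero power2_abs power_mono)
  qed
  have "(vnorm d (\<lambda>j. v j - w j))^2 \<le> (\<Sum>j<d. (1 / (8 * real d))^2)"
    unfolding vnorm_square by (intro sum_mono err) simp
  also have "\<dots> \<le> (1/8)^2" using dpos d by (simp add: power2_eq_square field_simps)
  finally have close: "vnorm d (\<lambda>j. v j - w j) \<le> 1/8"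
    by (rule power2_le_imp_le) simp
  have "vnorm d w \<le> vnorm d v + vnorm d (\<lambda>j. w j - v j)"
    using L2_set_triangle_ineq[of v "\<lambda>j. w j - v j" "{..<d}"] unfolding vnorm_def by simp
  also have "vnorm d (\<lambda>j. w j - v j) = vnorm d (\<lambda>j. v j - w j)"
    unfolding vnorm_def L2_set_def by (simp add: power2_commute)
  also have "vnorm d v = 1" using v unfolding vnorm_def L2_set_def by simp
  finally have "vnorm d w \<le> 9/8" using close by simp
  moreover have "w \<in> net d" unfolding net_def w_def using k \<open>vnorm d w \<le> 9/8\<close> w_def by auto
  ultimately show ?thesis using close by blast
qed

lemma real_card_net_le:
  assumes d: "2 \<le> d" and Y: "2 * real d \<le> Y"
  shows "real (card (net d)) \<le> Y^(4*d)"
proof -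
  have dr: "real d \<ge> 2" using d by simp
  have "real d ^ 3 \<ge> 2 ^ 3" using dr by (intro power_mono) auto
  then have "16 * real d * 8 \<le> 16 * real d * real d ^ 3" using dr by (intro mult_left_mono) auto
  moreover have "16 * real d * real d ^ 3 = (2 * real d)^4"
    by (simp add: power_mult_distrib eval_nat_numeral)
  ultimately have "16 * real d + 1 \<le> (2 * real d)^4" using dr by linarith
  also have "\<dots> \<le> Y^4" using Y dr by (intro power_mono) auto
  finally have base: "16 * real d + 1 \<le> Y^4" .
  have "real (card (net d)) \<le> real ((16 * d + 1) ^ d)"
    by (simp only: of_nat_le_iff card_net_le)
  also have "\<dots> = (16 * real d + 1) ^ d" by (simp add: add.commute)
  also have "\<dots> \<le> (Y^4)^d" using base by (intro power_mono) auto
  finally show ?thesis by (simp add: power_mult)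
qed

lemma card_net_square_mult_exp_le:
  assumes d: "2 \<le> d" and \<delta>: "0 < \<delta>" "\<delta> < 1"
  shows "real (card (net d))^2 * exp (- (9 * (real d * ln (2 * real d / \<delta>)))) \<le> \<delta>"
proof -
  define Y where "Y = 2 * real d / \<delta>"
  have dr: "real d \<ge> 2" using d by simp
  have Y: "Y \<ge> 2 * real d" "\<delta> = 2 * real d / Y"
    using \<delta> dr unfolding Y_def by (auto simp: field_simps)
  have Ypos: "Y > 0" using Y dr by linarith
  have "real (card (net d))^2 \<le> (Y^(4*d))^2"
    using real_card_net_le[OF d Y(1)] by (intro power_mono) auto
  then have cY: "real (card (net d))^2 \<le> Y^(8*d)" by (simp add: power_mult[symmetric] mult_ac)
  have "exp (9 * (real d * ln Y)) = exp (ln Y) ^ (9*d)"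
    by (simp add: exp_of_nat_mult[symmetric] mult_ac)
  then have eY: "exp (9 * (real d * ln Y)) = Y^(8*d) * Y^d"
    using Ypos by (simp add: power_add[symmetric])
  have "real (card (net d))^2 * exp (- (9 * (real d * ln Y))) = real (card (net d))^2 / (Y^(8*d) * Y^d)"
    by (simp add: exp_minus eY divide_inverse)
  also have "\<dots> \<le> Y^(8*d) / (Y^(8*d) * Y^d)"
    using cY Ypos by (intro divide_right_mono) auto
  also have "\<dots> = 1 / Y^d" using Ypos by simp
  also have "\<dots> \<le> 1 / Y^1" using Y dr d by (intro divide_left_mono power_increasing) auto
  also have "\<dots> \<le> \<delta>" using Y(2) Ypos dr \<delta> by (simp add: field_simps)
  finally show ?thesis unfolding Y_def .
qed

section \<open>The empirical matrix\<close>

definition Mmean :: "nat \<Rightarrow> nat \<Rightarrow> real" where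
  "Mmean i j = (if (i = 0 \<and> j = 1) \<or> (i = 1 \<and> j = 0) then 1 else 0)"

definition Mdev :: "nat \<Rightarrow> (nat \<Rightarrow> nat \<Rightarrow> real) \<Rightarrow> nat \<Rightarrow> nat \<Rightarrow> real" where
  "Mdev N x i j = Mhat N x i j - Mmean i j"

lemma Mdev_commute: "Mdev N x i j = Mdev N x j i"
  unfolding Mdev_def Mhat_def Mmean_def by (auto simp: mult_ac)

lemma sum_hypercube_label_monomial:
  assumes d: "2 \<le> d" and ij: "i < d" "j < d"
  shows "(\<Sum>z\<in>hypercube d. z 0 * z 1 * z i * z j) = 2^d * Mmean i j"
proof (cases "(i = 0 \<and> j = 1) \<or> (i = 1 \<and> j = 0)")
  case True
  have "z 0 * z 1 * z i * z j = 1" if "z \<in> hypercube d" for z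
  proof -
    have "z 0 \<in> {-1,1}" "z 1 \<in> {-1,1}" using that d unfolding hypercube_def by auto
    then show ?thesis using True by auto
  qed
  then show ?thesis using True by (simp add: Mmean_def card_hypercube)
next
  case False
  consider "i = j" | "i \<noteq> j" "i \<notin> {0,1}" | "i \<noteq> j" "j \<notin> {0,1}"
    using False by (cases "i = j"; cases "i \<in> {0,1}") auto
  then have "(\<Sum>z\<in>hypercube d. z 0 * z 1 * z i * z j) = 0"
  proof cases
    case 1
    show ?thesis by (rule sum_hypercube_eq_0_if_odd[of 0]) (use d 1 in \<open>auto simp: fun_upd_def\<close>)
  next
    case 2
    show ?thesis by (rule sum_hypercube_eq_0_if_odd[of i]) (use ij 2 in \<open>auto simp: fun_upd_def\<close>)
  next
    case 3
    show ?thesis by (rule sum_hypercube_eq_0_if_odd[of j]) (use ij 3 in \<open>auto simp: fun_upd_def\<close>)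
  qed
  then show ?thesis using False by (simp add: Mmean_def)
qed

lemma sample_form_eq_bilin: "sample_form d u w z = bilin d (\<lambda>i j. z 0 * z 1 * z i * z j) u w"
  unfolding sample_form_def dot_def bilin_def by (simp add: sum_product sum_distrib_left mult_ac)

lemma sum_hypercube_sample_form:
  assumes d: "2 \<le> d"
  shows "(\<Sum>z\<in>hypercube d. sample_form d u w z) = 2^d * bilin d Mmean u w"
proof -
  have "(\<Sum>z\<in>hypercube d. sample_form d u w z)
      = (\<Sum>i<d. \<Sum>j<d. u i * (\<Sum>z\<in>hypercube d. z 0 * z 1 * z i * z j) * w j)"
    unfolding sample_form_eq_bilin bilin_def
    by (simp add: sum.swap[of _ "hypercube d"] sum_distrib_left sum_distrib_right)
  also have "\<dots> = (\<Sum>i<d. \<Sum>j<d. u i * (2^d * Mmean i j) * w j)"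
    by (intro sum.cong refl) (subst sum_hypercube_label_monomial[OF d]; simp)
  also have "\<dots> = 2^d * bilin d Mmean u w"
    unfolding bilin_def by (simp add: sum_distrib_left mult_ac)
  finally show ?thesis .
qed

lemma bilin_Mhat: "bilin d (Mhat N x) u w = (\<Sum>s<N. sample_form d u w (x s)) / real N"
proof -
  have "bilin d (Mhat N x) u w
      = (\<Sum>i<d. \<Sum>j<d. \<Sum>s<N. u i * (x s 0 * x s 1 * x s i * x s j) * w j) / real N"
    unfolding bilin_def Mhat_def by (simp add: sum_divide_distrib sum_distrib_left sum_distrib_right)
  also have "\<dots> = (\<Sum>s<N. \<Sum>i<d. \<Sum>j<d. u i * (x s 0 * x s 1 * x s i * x s j) * w j) / real N"
    by (subst sum.swap) (simp add: sum.swap[of _ "{..<d}" "{..<N}"])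
  finally show ?thesis unfolding sample_form_eq_bilin bilin_def .
qed

lemma bilin_Mdev:
  assumes "1 \<le> N"
  shows "bilin d (Mdev N x) u w = (\<Sum>s<N. sample_form d u w (x s) - bilin d Mmean u w) / real N"
proof -
  have "bilin d (Mdev N x) u w = bilin d (Mhat N x) u w - bilin d Mmean u w"
    unfolding bilin_def Mdev_def by (simp add: algebra_simps sum_subtractf)
  then show ?thesis using assms by (simp add: bilin_Mhat sum_subtractf diff_divide_distrib)
qed

lemma spec_norm_Mmean_le:
  assumes d: "2 \<le> d"
  shows "spec_norm d Mmean \<le> 1"
proof (rule spec_norm_le)
  fix v :: "nat \<Rightarrow> real" assume v: "(\<Sum>j<d. (v j)^2) = 1"
  have "mat_vec d Mmean v i = (if i = 0 then v 1 else 0) + (if i = 1 then v 0 else 0)" if "i < d" for i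
  proof -
    have "mat_vec d Mmean v i = (\<Sum>j<d. (if j = 1 then (if i = 0 then v j else 0) else 0)
                                     + (if j = 0 then (if i = 1 then v j else 0) else 0))"
      unfolding mat_vec_def Mmean_def by (intro sum.cong refl) auto
    then show ?thesis using d by (simp add: sum.distrib)
  qed
  then have "(vnorm d (mat_vec d Mmean v))^2
      = (\<Sum>i<d. (if i = 0 then (v 1)^2 else 0) + (if i = 1 then (v 0)^2 else 0))"
    unfolding vnorm_square by (intro sum.cong refl) auto
  also have "\<dots> = (\<Sum>j\<in>{0,1}. (v j)^2)" using d by (simp add: sum.distrib)
  also have "\<dots> \<le> (\<Sum>j<d. (v j)^2)" using d by (intro sum_mono2) auto
  finally have "(vnorm d (mat_vec d Mmean v))^2 \<le> 1^2" using v by simp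
  then show "vnorm d (mat_vec d Mmean v) \<le> 1" by (rule power2_le_imp_le) simp
qed (use d in simp)

lemma spec_norm_Mhat_le:
  assumes d: "2 \<le> d"
  shows "spec_norm d (Mhat N x) \<le> 1 + spec_norm d (Mdev N x)"
proof -
  have "Mhat N x = (\<lambda>i j. Mmean i j + Mdev N x i j)" unfolding Mdev_def by simp
  then have "spec_norm d (Mhat N x) \<le> spec_norm d Mmean + spec_norm d (Mdev N x)"
    using spec_norm_add_le[of d] d by simp
  then show ?thesis using spec_norm_Mmean_le[OF d] by linarith
qed

section \<open>Concentration\<close>

lemma card_samples_sum_gt_le:
  fixes f :: "(nat \<Rightarrow> real) \<Rightarrow> real"
  assumes l: "0 \<le> l" and mgf: "(\<Sum>z\<in>hypercube d. exp (l * f z)) \<le> 2^d * K"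
  shows "real (card {x \<in> samples N d. a < (\<Sum>s<N. f (x s))})
         \<le> real (card (samples N d)) * K^N * exp (- (l * a))"
proof -
  define B where "B = {x \<in> samples N d. a < (\<Sum>s<N. f (x s))}"
  have "exp (l * a) \<le> (\<Prod>s<N. exp (l * f (x s)))" if "x \<in> B" for x
  proof -
    have "l * a \<le> l * (\<Sum>s<N. f (x s))" using that l unfolding B_def by (intro mult_left_mono) auto
    then have "exp (l * a) \<le> exp (\<Sum>s<N. l * f (x s))" by (simp add: sum_distrib_left)
    then show ?thesis by (simp add: exp_sum)
  qed
  then have "real (card B) * exp (l * a) \<le> (\<Sum>x\<in>B. \<Prod>s<N. exp (l * f (x s)))"
    using sum_mono[of B "\<lambda>_. exp (l * a)"] by simp
  also have "\<dots> \<le> (\<Sum>x\<in>samples N d. \<Prod>s<N. exp (l * f (x s)))"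
    by (intro sum_mono2 finite_samples) (auto simp: B_def intro: prod_nonneg)
  also have "\<dots> = (\<Sum>z\<in>hypercube d. exp (l * f z))^N" by (rule sum_samples_prod)
  also have "\<dots> \<le> (2^d * K)^N" by (intro power_mono mgf sum_nonneg) auto
  also have "\<dots> = real (card (samples N d)) * K^N"
    by (simp add: card_samples power_mult power_mult_distrib)
  finally have "real (card B) * exp (l * a) * exp (- (l * a))
      \<le> real (card (samples N d)) * K^N * exp (- (l * a))"
    by (rule mult_right_mono) simp
  then show ?thesis unfolding B_def by (simp add: mult.assoc mult_exp_exp)
qed

lemma card_bilin_Mdev_gt_le:
  assumes d: "2 \<le> d" and N: "1 \<le> N" and u: "vnorm d u \<le> 9/8" and w: "vnorm d w \<le> 9/8"
    and l: "0 \<le> l" "l \<le> 1/16"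
  shows "real (card {x \<in> samples N d. t < bilin d (Mdev N x) u w})
         \<le> real (card (samples N d)) * exp (- (real N * (l * t - 8192 * l^2)))"
proof -
  define \<mu> where "\<mu> = bilin d Mmean u w"
  have events: "{x \<in> samples N d. t < bilin d (Mdev N x) u w}
      = {x \<in> samples N d. real N * t < (\<Sum>s<N. sample_form d u w (x s) - \<mu>)}"
    using N by (simp add: bilin_Mdev \<mu>_def pos_less_divide_eq mult.commute)
  have mgf: "(\<Sum>z\<in>hypercube d. exp (l * (sample_form d u w z - \<mu>))) \<le> 2^d * exp (8192 * l^2)"
    using sum_hypercube_exp_sample_form_le[OF d u w, of l] l
    by (simp add: sum_hypercube_sample_form[OF d] \<mu>_def)
  have "real (card {x \<in> samples N d. t < bilin d (Mdev N x) u w})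
      \<le> real (card (samples N d)) * exp (8192 * l^2) ^ N * exp (- (l * (real N * t)))"
    unfolding events
    by (rule card_samples_sum_gt_le[where f="\<lambda>z. sample_form d u w z - \<mu>", OF l(1) mgf])
  also have "\<dots> = real (card (samples N d)) * exp (- (real N * (l * t - 8192 * l^2)))"
    by (simp add: exp_of_nat_mult[symmetric] mult.assoc mult_exp_exp algebra_simps)
  finally show ?thesis .
qed

lemma prob_pmf_of_set_ge:
  assumes "finite S" "S \<noteq> {}" "real (card (S - G)) \<le> real (card S) * \<epsilon>"
  shows "1 - \<epsilon> \<le> measure_pmf.prob (pmf_of_set S) G"
proof -
  have S: "real (card S) > 0" using assms(1,2) by (simp add: card_gt_0_iff)
  have "real (card S) = real (card (S \<inter> G)) + real (card (S - G))"
    using card_Int_Diff[OF assms(1), of G] by simp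
  then have "real (card S) * (1 - \<epsilon>) \<le> real (card (S \<inter> G))"
    using assms(3) by (simp add: algebra_simps)
  then show ?thesis
    using S by (simp add: measure_pmf_of_set[OF assms(2,1)] field_simps)
qed

lemma prob_spec_norm_Mhat_le:
  assumes d: "2 \<le> d" and N: "1 \<le> N" and l: "0 \<le> l" "l \<le> 1/16"
  shows "1 - real (card (net d))^2 * exp (- (real N * (l * t - 8192 * l^2)))
         \<le> measure_pmf.prob (pmf_of_set (samples N d)) {x. spec_norm d (Mhat N x) \<le> 1 + 64 * t / 47}"
proof (rule prob_pmf_of_set_ge[OF finite_samples samples_nonempty])
  define S G where "S = samples N d" and "G = {x. spec_norm d (Mhat N x) \<le> 1 + 64 * t / 47}"
  define Bad where "Bad p = {x \<in> S. t < bilin d (Mdev N x) (fst p) (snd p)}" for p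
  have "S - G \<subseteq> (\<Union>p\<in>net d \<times> net d. Bad p)"
  proof
    fix x assume x: "x \<in> S - G"
    show "x \<in> (\<Union>p\<in>net d \<times> net d. Bad p)"
    proof (rule ccontr)
      assume "x \<notin> (\<Union>p\<in>net d \<times> net d. Bad p)"
      then have "bilin d (Mdev N x) u w \<le> t" if "u \<in> net d" "w \<in> net d" for u w
        using x that unfolding Bad_def by force
      then have "spec_norm d (Mdev N x) \<le> 64 * t / 47"
        using d by (intro spec_norm_le_of_net[where V="net d"] Mdev_commute net_covers) auto
      then show False using x spec_norm_Mhat_le[OF d, of N x] unfolding G_def by auto
    qed
  qed
  moreover have "finite (\<Union>p\<in>net d \<times> net d. Bad p)"
    by (rule finite_subset[of _ S]) (auto simp: Bad_def S_def finite_samples)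
  ultimately have "real (card (S - G)) \<le> real (card (\<Union>p\<in>net d \<times> net d. Bad p))"
    by (intro of_nat_mono card_mono)
  also have "\<dots> \<le> (\<Sum>p\<in>net d \<times> net d. real (card (Bad p)))"
    using card_UN_le[of "net d \<times> net d" Bad] finite_net by (simp flip: of_nat_sum)
  also have "\<dots> \<le> (\<Sum>p\<in>net d \<times> net d. real (card S) * exp (- (real N * (l * t - 8192 * l^2))))"
    unfolding Bad_def S_def
    by (intro sum_mono card_bilin_Mdev_gt_le d N l) (auto dest: vnorm_le_of_mem_net)
  also have "\<dots> = real (card S) * (real (card (net d))^2 * exp (- (real N * (l * t - 8192 * l^2))))"
    by (simp add: card_cartesian_product power2_eq_square mult_ac)
  finally show "real (card (samples N d - G))
      \<le> real (card (samples N d)) * (real (card (net d))^2 * exp (- (real N * (l * t - 8192 * l^2))))"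
    unfolding S_def .
qed

text \<open>The unconstrained optimum \<open>\<lambda> = t/16384\<close> of \<open>\<lambda>t - 8192\<lambda>\<^sup>2\<close> is admissible only for
  \<open>t \<le> 1024\<close>; beyond that \<open>\<lambda> = 1/16\<close> still gives \<open>t/32\<close>.\<close>

lemma exists_chernoff_exponent:
  fixes X n :: real
  assumes X: "X > 0" and n: "n > 0"
  defines "t \<equiv> 600 * (sqrt (X / n) + X / n)"
  shows "\<exists>l. 0 \<le> l \<and> l \<le> 1/16 \<and> 9 * X \<le> n * (l * t - 8192 * l^2)"
proof -
  define s where "s = sqrt (X / n)"
  have s: "s \<ge> 0" "s^2 = X / n" unfolding s_def using X n by simp_all
  have t: "t \<ge> 600 * s" "t \<ge> 600 * (X / n)" unfolding t_def s_def using X n by auto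
  show ?thesis
  proof (cases "t \<le> 1024")
    case True
    have "(600 * s)^2 \<le> t^2" using t s by (intro power_mono) auto
    then have "360000 * (X / n) \<le> t^2" using s by (simp add: power_mult_distrib)
    then have "n * (360000 * (X / n) / 32768) \<le> n * (t^2 / 32768)"
      using n by (intro mult_left_mono divide_right_mono) auto
    then have "9 * X \<le> n * (t / 16384 * t - 8192 * (t / 16384)^2)"
      using n X by (simp add: power2_eq_square field_simps)
    moreover have "0 \<le> t / 16384" "t / 16384 \<le> 1/16" using t s True by auto
    ultimately show ?thesis by blast
  next
    case False
    have "n * (600 * (X / n) / 32) \<le> n * (t / 32)" using n t by (intro mult_left_mono) auto
    moreover have "n * (t / 32) \<le> n * (1/16 * t - 8192 * (1/16)^2)"
      using n False by (intro mult_left_mono) (auto simp: power2_eq_square)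
    moreover have "n * (600 * (X / n) / 32) = 600/32 * X" using n by simp
    ultimately have "9 * X \<le> n * (1/16 * t - 8192 * (1/16)^2)" using X by linarith
    then show ?thesis by (intro exI[of _ "1/16"]) simp
  qed
qed

theorem lemma8:
  shows "\<exists>C>0. \<forall>N d \<delta>. N \<ge> 1 \<longrightarrow> d \<ge> 2 \<longrightarrow> 0 < \<delta> \<longrightarrow> \<delta> < 1 \<longrightarrow>
     measure_pmf.prob (pmf_of_set (samples N d))
       {x. spec_norm d (Mhat N x) \<le> 1 + C * (sqrt (real d * ln (2 * real d / \<delta>) / real N)
                                         + real d * ln (2 * real d / \<delta>) / real N)}
     \<ge> 1 - \<delta>"
proof (intro exI[of _ 1000] conjI allI impI)
  fix N d :: nat and \<delta> :: real
  assume N: "N \<ge> 1" and d: "d \<ge> 2" and \<delta>: "0 < \<delta>" "\<delta> < 1"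
  define X where "X = real d * ln (2 * real d / \<delta>)"
  define q where "q = sqrt (X / real N) + X / real N"
  have "1 < 2 * real d / \<delta>" using d \<delta> by (simp add: field_simps)
  then have X: "X > 0" unfolding X_def using d by simp
  then have q: "q \<ge> 0" unfolding q_def by simp
  obtain l where l: "0 \<le> l" "l \<le> 1/16" "9 * X \<le> real N * (l * (600 * q) - 8192 * l^2)"
    using exists_chernoff_exponent[OF X, of "real N"] N unfolding q_def by auto
  have "real (card (net d))^2 * exp (- (real N * (l * (600 * q) - 8192 * l^2)))
      \<le> real (card (net d))^2 * exp (- (9 * X))"
    using l(3) by (intro mult_left_mono) auto
  also have "\<dots> \<le> \<delta>" unfolding X_def by (rule card_net_square_mult_exp_le[OF d \<delta>])
  finally have "1 - \<delta> \<le> measure_pmf.prob (pmf_of_set (samples N d))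
      {x. spec_norm d (Mhat N x) \<le> 1 + 64 * (600 * q) / 47}"
    using prob_spec_norm_Mhat_le[OF d N l(1,2), of "600 * q"] by linarith
  also have "\<dots> \<le> measure_pmf.prob (pmf_of_set (samples N d)) {x. spec_norm d (Mhat N x) \<le> 1 + 1000 * q}"
    using q by (intro measure_pmf.finite_measure_mono) auto
  finally show "measure_pmf.prob (pmf_of_set (samples N d))
       {x. spec_norm d (Mhat N x) \<le> 1 + 1000 * (sqrt (real d * ln (2 * real d / \<delta>) / real N)
                                         + real d * ln (2 * real d / \<delta>) / real N)}
     \<ge> 1 - \<delta>" unfolding q_def X_def .
qed simp

end
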